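(* The map $\mathrm{End}(\mathbb{F}_p((t))^d)\to M_{d,\mathbb{Z}}(\mathbb{F}_p)$, $A\mapsto (A_{i,j})_{i,j\in\mathbb{Z}}$, is surjective and hence an isomorphism of rings.
   Context: $\mathrm{End}(\mathbb{F}_p((t))^d)$ is the ring of continuous group endomorphisms of $(\mathbb{F}_p((t))^d,+)$. For $n\in\mathbb{Z}$ let $\mathbb{V}_n=\{(a_1t^n,\dots,a_dt^n): a_r\in\mathbb{F}_p\}\cong\mathbb{F}_p^d$ and $\pi_n$ the projection onto $\mathbb{V}_n$ taking $t^n$-coefficients; the block matrix of $A$ is $A_{i,j}=\pi_i\circ A|_{\mathbb{V}_j}$, a $d\times d$ matrix over $\mathbb{F}_p$. $M_{d,\mathbb{Z}}(\mathbb{F}_p)$ is the ring of infinite block matrices $(A_{i,j})_{i,j\in\mathbb{Z}}$ with $d\times d$ blocks over $\mathbb{F}_p$ satisfying: (M1) for each $i$ there is $J_i$ with $A_{i,j}=0$ for $j>J_i$; (M2) for each $j$ there is $I_j$ with $A_{i,j}=0$ for $i<I_j$; (M3) there are $I,J$ with $A_{i,j}=0$ whenever $i<I$ and $j>J$; it is known that the block matrix of every continuous endomorphism lies in $M_{d,\mathbb{Z}}(\mathbb{F}_p)$ and that this map is a ring homomorphism. *)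

theory Defs
  imports "HOL-Analysis.Analysis" "HOL-Computational_Algebra.Formal_Laurent_Series"
begin

text \<open>The ground field F_p is modelled by a finite field type 'k of prime cardinality p.
  The space F_p((t))^d is the type ('k fls)^'n, where 'n is a finite index type with
  CARD('n) = d. Laurent series carry the library's t-adic metric (fls is a metric space),
  and ^'n carries the product (finite-dimensional) metric, i.e. the product topology.\<close>

definition cont_End :: "(('k::{field,finite} fls)^'n::finite \<Rightarrow> ('k fls)^'n) set" where
  "cont_End = {A. (\<forall>x y. A (x + y) = A x + A y) \<and> continuous_on UNIV A}"

definition monom_fls :: "'k::field \<Rightarrow> int \<Rightarrow> 'k fls" where
  "monom_fls a j = fls_shift (-j) (fls_const a)"

text \<open>Block (i,j) of A: the d x d matrix of pi_i o A restricted to V_j; its (r,s) entry is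
  the t^i-coefficient of the r-th component of A applied to e_s t^j.\<close>
definition block :: "(('k::{field,finite} fls)^'n::finite \<Rightarrow> ('k fls)^'n) \<Rightarrow> int \<Rightarrow> int \<Rightarrow> 'k^'n^'n" where
  "block A i j = (\<chi> r s. fls_nth ((A (\<chi> r'. if r' = s then monom_fls 1 j else 0)) $ r) i)"

text \<open>The ring M_{d,Z}(F_p) of infinite block matrices with conditions (M1)-(M3).\<close>
definition Mdz :: "(int \<Rightarrow> int \<Rightarrow> 'k::field^'n::finite^'n) set" where
  "Mdz = {X. (\<forall>i. \<exists>J. \<forall>j>J. X i j = 0)
           \<and> (\<forall>j. \<exists>I. \<forall>i<I. X i j = 0)
           \<and> (\<exists>I J. \<forall>i j. i < I \<and> j > J \<longrightarrow> X i j = 0)}"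

text \<open>Multiplication in M_{d,Z}(F_p); the sum is finite for elements of Mdz by (M1),(M2).\<close>
definition block_mult :: "(int \<Rightarrow> int \<Rightarrow> 'k::field^'n::finite^'n) \<Rightarrow> (int \<Rightarrow> int \<Rightarrow> 'k^'n^'n) \<Rightarrow> int \<Rightarrow> int \<Rightarrow> 'k^'n^'n" where
  "block_mult X Y i j = (\<Sum>k \<in> {k. X i k \<noteq> 0 \<and> Y k j \<noteq> 0}. X i k ** Y k j)"

definition block_one :: "int \<Rightarrow> int \<Rightarrow> 'k::field^'n::finite^'n" where
  "block_one i j = (if i = j then mat 1 else 0)"

end

theory Submission
  imports Defs "HOL-Number_Theory.Residues" "HOL-Library.Groups_Big_Fun"
begin

text \<open>Over the prime field every scalar is a sum of ones, so a continuous additive endomorphism A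
  is linear on each V_j, and there it is described by the blocks A_{i,j}. Continuity for the
  t-adic topology means that the coefficients of A x below t^i only depend on the coefficients of
  x below some t^J; truncating x there gives the finite expansion
  \<pi>_i(A x) = \<Sum>_j A_{i,j} \<pi>_j(x). It shows that A is determined by its blocks and yields the
  composition rule. Conversely, for X satisfying (M1)-(M3) the same formula defines the inverse:
  (M1) makes the sum finite, (M2) and (M3) bound the resulting Laurent series from below, and
  (M1) and (M3) give continuity.\<close>

lemma of_nat_surj_prime_card:
  assumes "prime CARD('k::{field,finite})"
  shows "surj (of_nat :: nat \<Rightarrow> 'k)"
proof -
  let ?p = "CARD('k)"
  have "CHAR('k) dvd ?p" using CHAR_dvd_CARD[where 'a='k] by simp
  then have char: "CHAR('k) = ?p" using assms CHAR_not_1 by (metis One_nat_def prime_nat_iff)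
  have "inj_on (of_nat :: nat \<Rightarrow> 'k) {..<?p}"
    by (rule inj_onI) (use char in \<open>auto simp: of_nat_eq_iff_cong_CHAR cong_def\<close>)
  then have "card ((of_nat :: nat \<Rightarrow> 'k) ` {..<?p}) = card (UNIV :: 'k set)"
    by (simp add: card_image)
  then have "(of_nat :: nat \<Rightarrow> 'k) ` {..<?p} = UNIV"
    by (metis card_subset_eq finite_class.finite_UNIV subset_UNIV)
  then show ?thesis by (metis image_subset_iff rangeI subset_antisym subset_UNIV)
qed

lemma additive_imp_linear_prime_card:
  fixes g :: "'k::{field,finite}^'m \<Rightarrow> 'k^'n"
  assumes "prime CARD('k)" and "Modules.additive g"
  shows "Vector_Spaces.linear (*s) (*s) g"
proof
  interpret Modules.additive g by fact
  show "g (x + y) = g x + g y" for x y by (rule add)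
  have "g (of_nat n *s x) = of_nat n *s g x" for n x
    by (induction n) (simp_all add: zero add)
  then show "g (c *s x) = c *s g x" for c x
    using of_nat_surj_prime_card[OF assms(1)] by (metis surjD)
qed

definition fls_vec_nth :: "('a::zero fls)^'n \<Rightarrow> int \<Rightarrow> 'a^'n" where
  "fls_vec_nth x i = (\<chi> s. fls_nth (x $ s) i)"

definition fls_vec_monom :: "'k::field^'n \<Rightarrow> int \<Rightarrow> ('k fls)^'n" where
  "fls_vec_monom v j = (\<chi> s. monom_fls (v $ s) j)"

definition vanishes_below :: "int \<Rightarrow> ('a::zero fls)^'n \<Rightarrow> bool" where
  "vanishes_below N x \<longleftrightarrow> (\<forall>i<N. fls_vec_nth x i = 0)"

lemma fls_vec_eq_iff: "x = y \<longleftrightarrow> (\<forall>i. fls_vec_nth x i = fls_vec_nth y i)"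
  by (auto simp: fls_vec_nth_def vec_eq_iff fls_eq_iff)

lemma additive_fls_vec_nth: "Modules.additive (\<lambda>x::('a::ab_group_add fls)^'n. fls_vec_nth x i)"
  by unfold_locales (simp add: fls_vec_nth_def vec_eq_iff)

lemma fls_vec_nth_monom [simp]: "fls_vec_nth (fls_vec_monom v j) i = (if i = j then v else 0)"
  by (simp add: fls_vec_nth_def fls_vec_monom_def monom_fls_def vec_eq_iff)

lemma additive_fls_vec_monom: "Modules.additive (\<lambda>v. fls_vec_monom v j)"
  by unfold_locales (simp add: fls_vec_eq_iff additive.add[OF additive_fls_vec_nth])

lemma eventually_fls_vec_nth_at_bot: "eventually (\<lambda>i. fls_vec_nth x i = 0) at_bot"
proof -
  have "eventually (\<lambda>i. fls_nth (x $ s) i = 0) at_bot" for s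
    unfolding eventually_at_bot_linorder by (auto intro: exI[of _ "fls_subdegree (x $ s) - 1"])
  then show ?thesis
    unfolding fls_vec_nth_def vec_eq_iff by (simp add: eventually_all_finite)
qed

lemma ex_vanishes_below: "\<exists>m. vanishes_below m x"
  using eventually_fls_vec_nth_at_bot[of x]
  unfolding eventually_at_bot_linorder vanishes_below_def by (meson less_imp_le)

lemma block_eq_matrix: "block A i j = matrix (\<lambda>v. fls_vec_nth (A (fls_vec_monom v j)) i)"
proof -
  have unit: "(\<chi> r. if r = s then monom_fls 1 j else 0) = fls_vec_monom (axis s 1) j" for s
    by (simp add: fls_vec_monom_def axis_def vec_eq_iff monom_fls_def)
  show ?thesis by (simp add: block_def matrix_def fls_vec_nth_def unit)
qed

lemma block_matrix_vector_mult:
  fixes A :: "('k::{field,finite} fls)^'n \<Rightarrow> ('k fls)^'n"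
  assumes "prime CARD('k)" and "Modules.additive A"
  shows "block A i j *v v = fls_vec_nth (A (fls_vec_monom v j)) i"
proof -
  have "Modules.additive (\<lambda>v. fls_vec_nth (A (fls_vec_monom v j)) i)"
    using assms(2) by unfold_locales
      (simp add: additive.add[OF additive_fls_vec_monom] additive.add[OF additive_fls_vec_nth]
        additive.add[OF assms(2)])
  then show ?thesis
    unfolding block_eq_matrix by (intro matrix_works additive_imp_linear_prime_card assms(1))
qed

lemma dist_fls_0_le_two_powr_iff:
  fixes f :: "'a::group_add fls"
  shows "dist f 0 \<le> 2 powr (- real_of_int N) \<longleftrightarrow> (\<forall>i<N. fls_nth f i = 0)"
proof (cases "f = 0")
  case False
  let ?d = "fls_subdegree f"
  have "dist f 0 = 2 powr (- real_of_int ?d)"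
  proof (cases "?d \<ge> 0")
    case True
    then show ?thesis
      using False powr_realpow[of 2 "nat ?d"] by (simp add: dist_fls_def powr_minus)
  next
    case False
    then show ?thesis
      using \<open>f \<noteq> 0\<close> powr_realpow[of 2 "nat (- ?d)"] by (simp add: dist_fls_def)
  qed
  then have "dist f 0 \<le> 2 powr (- real_of_int N) \<longleftrightarrow> N \<le> ?d" by simp
  also have "\<dots> \<longleftrightarrow> (\<forall>i<N. fls_nth f i = 0)"
    using False nth_fls_subdegree_nonzero[of f] fls_eq0_below_subdegree[of _ f]
    by (meson le_less_trans less_le_not_le linorder_le_less_linear)
  finally show ?thesis .
qed simp

lemma dist_fls_vec_eq_dist_diff: "dist x y = dist (x - y) (0 :: ('a::group_add fls)^'n)"
proof -
  have "dist f g = dist (f - g) 0" for f g :: "'a fls"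
    by (simp add: dist_fls_def)
  then show ?thesis by (simp add: dist_vec_def)
qed

lemma vanishes_below_if_dist_le:
  fixes x :: "('a::group_add fls)^'n"
  assumes "dist x 0 \<le> 2 powr (- real_of_int N)"
  shows "vanishes_below N x"
proof -
  have "dist (x $ s) 0 \<le> 2 powr (- real_of_int N)" for s
    using dist_vec_nth_le[of x s 0] assms by simp
  then show ?thesis
    by (auto simp: vanishes_below_def fls_vec_nth_def vec_eq_iff dist_fls_0_le_two_powr_iff)
qed

lemma dist_le_if_vanishes_below:
  fixes x :: "('a::group_add fls)^'n"
  assumes "vanishes_below N x"
  shows "dist x 0 \<le> real CARD('n) * 2 powr (- real_of_int N)"
proof -
  have "dist x 0 \<le> (\<Sum>s\<in>UNIV. dist (x $ s) (0 $ s))"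
    unfolding dist_vec_def by (rule L2_set_le_sum) simp
  also have "\<dots> \<le> (\<Sum>s\<in>(UNIV::'n set). 2 powr (- real_of_int N))"
    using assms by (intro sum_mono)
      (auto simp: dist_fls_0_le_two_powr_iff vanishes_below_def fls_vec_nth_def vec_eq_iff)
  finally show ?thesis by simp
qed

lemma ex_two_powr_less: "0 < c \<Longrightarrow> \<exists>N::int. K * 2 powr (- real_of_int N) < c"
proof -
  assume "0 < c"
  obtain n where "K / c < 2 ^ n" using real_arch_pow[of 2 "K / c"] by auto
  then have "K * 2 powr (- real_of_int (int n)) < c"
    using \<open>0 < c\<close> by (simp add: powr_minus powr_realpow divide_simps mult.commute)
  then show ?thesis ..
qed

lemma continuous_on_additive_iff_vanishes_below:
  fixes A :: "('a::ab_group_add fls)^'n \<Rightarrow> ('a fls)^'m"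
  assumes "Modules.additive A"
  shows "continuous_on UNIV A \<longleftrightarrow> (\<forall>I. \<exists>J. \<forall>y. vanishes_below J y \<longrightarrow> vanishes_below I (A y))"
proof
  interpret Modules.additive A by fact
  assume "continuous_on UNIV A"
  show "\<forall>I. \<exists>J. \<forall>y. vanishes_below J y \<longrightarrow> vanishes_below I (A y)"
  proof
    fix I
    have "(2::real) powr (- real_of_int I) > 0" by simp
    then obtain d where "d > 0"
      and d: "\<And>y. dist y 0 < d \<Longrightarrow> dist (A y) (A 0) < 2 powr (- real_of_int I)"
      using \<open>continuous_on UNIV A\<close> unfolding continuous_on_iff by (metis UNIV_I)
    obtain J where J: "real CARD('n) * 2 powr (- real_of_int J) < d"
      using ex_two_powr_less[OF \<open>d > 0\<close>] by blast
    have "vanishes_below I (A y)" if "vanishes_below J y" for y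
    proof (rule vanishes_below_if_dist_le)
      have "dist y 0 < d" using dist_le_if_vanishes_below[OF that] J by linarith
      then show "dist (A y) 0 \<le> 2 powr (- real_of_int I)" using d zero by fastforce
    qed
    then show "\<exists>J. \<forall>y. vanishes_below J y \<longrightarrow> vanishes_below I (A y)" by blast
  qed
next
  interpret Modules.additive A by fact
  assume vanish: "\<forall>I. \<exists>J. \<forall>y. vanishes_below J y \<longrightarrow> vanishes_below I (A y)"
  show "continuous_on UNIV A"
    unfolding continuous_on_iff
  proof (intro ballI allI impI)
    fix x :: "('a fls)^'n" and e :: real
    assume "e > 0"
    obtain I where I: "real CARD('m) * 2 powr (- real_of_int I) < e"
      using ex_two_powr_less[OF \<open>e > 0\<close>] by blast
    obtain J where J: "\<forall>y. vanishes_below J y \<longrightarrow> vanishes_below I (A y)"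
      using vanish by blast
    have "dist (A x') (A x) < e" if "dist x' x < 2 powr (- real_of_int J)" for x'
    proof -
      have "vanishes_below I (A (x' - x))"
        using that J by (simp add: vanishes_below_if_dist_le dist_fls_vec_eq_dist_diff[of x'])
      then have "dist (A (x' - x)) 0 < e"
        by (rule le_less_trans[OF dist_le_if_vanishes_below I])
      then show ?thesis by (simp add: diff dist_fls_vec_eq_dist_diff[of "A x'"])
    qed
    moreover have "(2::real) powr (- real_of_int J) > 0" by simp
    ultimately show "\<exists>d>0. \<forall>x'\<in>UNIV. dist x' x < d \<longrightarrow> dist (A x') (A x) < e"
      by blast
  qed
qed

lemma cont_End_iff:
  "A \<in> cont_End \<longleftrightarrow> Modules.additive A \<and> (\<forall>I. \<exists>J. \<forall>y. vanishes_below J y \<longrightarrow> vanishes_below I (A y))"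
  using continuous_on_additive_iff_vanishes_below[of A]
  by (auto simp: cont_End_def Modules.additive_def)

lemma finite_int_Collect_if_eventually_not:
  assumes "eventually (\<lambda>j. \<not> P j) at_top" and "eventually (\<lambda>j. \<not> P j) at_bot"
  shows "finite {j::int. P j}"
proof -
  obtain a b where "\<forall>j\<ge>b. \<not> P j" and "\<forall>j\<le>a. \<not> P j"
    using assms unfolding eventually_at_top_linorder eventually_at_bot_linorder by blast
  then have "{j. P j} \<subseteq> {a..b}" by (auto simp: subset_iff) (meson linear)+
  then show ?thesis using finite_subset by blast
qed

lemma Mdz_row_eventually_zero: "X \<in> Mdz \<Longrightarrow> eventually (\<lambda>j. X i j = 0) at_top"
  unfolding Mdz_def eventually_at_top_dense by blast

lemma Mdz_column_eventually_zero: "X \<in> Mdz \<Longrightarrow> eventually (\<lambda>i. X i j = 0) at_bot"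
  unfolding Mdz_def eventually_at_bot_dense by blast

lemma vanishes_below_fls_vec_monom: "J \<le> j \<Longrightarrow> vanishes_below J (fls_vec_monom v j)"
  by (simp add: vanishes_below_def)

lemma block_eq_0_if_vanishes_below:
  assumes "\<forall>y. vanishes_below J y \<longrightarrow> vanishes_below I (A y)" and "i < I" and "J \<le> j"
  shows "block A i j = 0"
proof -
  have "fls_vec_nth (A (fls_vec_monom v j)) i = 0" for v
    using assms vanishes_below_fls_vec_monom unfolding vanishes_below_def by blast
  then show ?thesis by (simp add: block_eq_matrix matrix_def vec_eq_iff)
qed

lemma block_in_Mdz:
  assumes "A \<in> cont_End"
  shows "block A \<in> Mdz"
proof -
  have cont: "\<exists>J. \<forall>y. vanishes_below J y \<longrightarrow> vanishes_below I (A y)" for I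
    using assms by (simp add: cont_End_iff)
  have rows: "\<exists>J. \<forall>j>J. block A i j = 0" for i
  proof -
    obtain J where "\<forall>y. vanishes_below J y \<longrightarrow> vanishes_below (i + 1) (A y)"
      using cont by blast
    then have "block A i j = 0" if "j > J" for j
      using that by (intro block_eq_0_if_vanishes_below) auto
    then show ?thesis by blast
  qed
  have "eventually (\<lambda>i. block A i j = 0) at_bot" for j
  proof -
    have "eventually (\<lambda>i. \<forall>s. fls_vec_nth (A (fls_vec_monom (axis s 1) j)) i = 0) at_bot"
      by (intro eventually_all_finite allI eventually_fls_vec_nth_at_bot)
    then show ?thesis
      by eventually_elim (simp add: block_eq_matrix matrix_def vec_eq_iff)
  qed
  then have columns: "\<exists>I. \<forall>i<I. block A i j = 0" for j
    unfolding eventually_at_bot_dense by blast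
  obtain J where "\<forall>y. vanishes_below J y \<longrightarrow> vanishes_below 0 (A y)"
    using cont by blast
  then have "block A i j = 0" if "i < 0" and "j > J" for i j
    using that by (intro block_eq_0_if_vanishes_below) auto
  then have "\<exists>I J. \<forall>i j. i < I \<and> j > J \<longrightarrow> block A i j = 0" by blast
  with rows columns show ?thesis unfolding Mdz_def by blast
qed

lemma fls_vec_nth_eq_block_sum:
  fixes A :: "('k::{field,finite} fls)^'n \<Rightarrow> ('k fls)^'n"
  assumes "prime CARD('k)" and "Modules.additive A" and "vanishes_below m x"
    and J: "\<forall>y. vanishes_below J y \<longrightarrow> vanishes_below (i + 1) (A y)"
  shows "fls_vec_nth (A x) i = (\<Sum>j\<in>{m..<J}. block A i j *v fls_vec_nth x j)"
proof -
  interpret A: Modules.additive A by fact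
  note nth = additive.sum[OF additive_fls_vec_nth] additive.diff[OF additive_fls_vec_nth]
  define T where "T = (\<Sum>j\<in>{m..<J}. fls_vec_monom (fls_vec_nth x j) j)"
  have "fls_vec_nth T i' = (\<Sum>j\<in>{m..<J}. if i' = j then fls_vec_nth x j else 0)" for i'
    by (simp add: T_def nth(1))
  then have "fls_vec_nth T i' = (if i' \<in> {m..<J} then fls_vec_nth x i' else 0)" for i'
    by (simp add: sum.delta')
  then have "vanishes_below J (x - T)"
    using \<open>vanishes_below m x\<close> by (simp add: vanishes_below_def nth(2))
  then have "fls_vec_nth (A (x - T)) i = 0"
    using J unfolding vanishes_below_def by simp
  then have "fls_vec_nth (A x) i = fls_vec_nth (A T) i"
    by (simp add: A.diff nth(2))
  also have "\<dots> = (\<Sum>j\<in>{m..<J}. fls_vec_nth (A (fls_vec_monom (fls_vec_nth x j) j)) i)"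
    by (simp add: T_def A.sum nth(1))
  also have "\<dots> = (\<Sum>j\<in>{m..<J}. block A i j *v fls_vec_nth x j)"
    by (simp add: block_matrix_vector_mult[OF assms(1,2)])
  finally show ?thesis .
qed

lemma fls_vec_nth_eq_block_Sum_any:
  fixes A :: "('k::{field,finite} fls)^'n \<Rightarrow> ('k fls)^'n"
  assumes "prime CARD('k)" and "A \<in> cont_End"
  shows "fls_vec_nth (A x) i = Sum_any (\<lambda>j. block A i j *v fls_vec_nth x j)"
proof -
  obtain m where m: "vanishes_below m x" using ex_vanishes_below by blast
  obtain J where J: "\<forall>y. vanishes_below J y \<longrightarrow> vanishes_below (i + 1) (A y)"
    using assms(2) by (auto simp: cont_End_iff)
  have support: "{j. block A i j *v fls_vec_nth x j \<noteq> 0} \<subseteq> {m..<J}"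
  proof
    fix j assume "j \<in> {j. block A i j *v fls_vec_nth x j \<noteq> 0}"
    then have "fls_vec_nth x j \<noteq> 0" and "block A i j \<noteq> 0" by auto
    then show "j \<in> {m..<J}"
      using m block_eq_0_if_vanishes_below[OF J, of i j] unfolding vanishes_below_def by force
  qed
  have "fls_vec_nth (A x) i = (\<Sum>j\<in>{m..<J}. block A i j *v fls_vec_nth x j)"
    using fls_vec_nth_eq_block_sum[OF assms(1) _ m J] assms(2) by (simp add: cont_End_iff)
  also have "\<dots> = Sum_any (\<lambda>j. block A i j *v fls_vec_nth x j)"
    by (rule Sum_any.expand_superset[symmetric]) (simp_all add: support)
  finally show ?thesis .
qed

text \<open>The inverse of block. Both Sum_any (which is 0 on infinite supports) and Abs_fls (which
  needs a lower bound on the nonzero coefficients) only behave as intended for X \<in> Mdz.\<close>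

definition block_op :: "(int \<Rightarrow> int \<Rightarrow> 'a::semiring_1^'n^'m) \<Rightarrow> ('a fls)^'n \<Rightarrow> ('a fls)^'m" where
  "block_op X x = (\<chi> r. Abs_fls (\<lambda>i. Sum_any (\<lambda>j. X i j *v fls_vec_nth x j) $ r))"

lemma finite_block_row_support:
  assumes "X \<in> Mdz"
  shows "finite {j. X i j *v fls_vec_nth x j \<noteq> 0}"
proof -
  have "finite {j. X i j \<noteq> 0 \<and> fls_vec_nth x j \<noteq> 0}"
  proof (rule finite_int_Collect_if_eventually_not)
    show "eventually (\<lambda>j. \<not> (X i j \<noteq> 0 \<and> fls_vec_nth x j \<noteq> 0)) at_top"
      using Mdz_row_eventually_zero[OF assms, of i] by (rule eventually_mono) simp
    show "eventually (\<lambda>j. \<not> (X i j \<noteq> 0 \<and> fls_vec_nth x j \<noteq> 0)) at_bot"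
      using eventually_fls_vec_nth_at_bot[of x] by (rule eventually_mono) simp
  qed
  then show ?thesis by (rule rev_finite_subset) auto
qed

lemma block_op_coeff_eventually_zero:
  assumes "X \<in> Mdz"
  shows "eventually (\<lambda>i. Sum_any (\<lambda>j. X i j *v fls_vec_nth x j) = 0) at_bot"
proof -
  obtain I0 J0 where corner: "\<forall>i j. i < I0 \<and> j > J0 \<longrightarrow> X i j = 0"
    using assms unfolding Mdz_def by blast
  obtain m where m: "\<forall>j\<le>m. fls_vec_nth x j = 0"
    using eventually_fls_vec_nth_at_bot[of x] unfolding eventually_at_bot_linorder by blast
  have "eventually (\<lambda>i. \<forall>j\<in>{m..J0}. X i j = 0) at_bot"
    using Mdz_column_eventually_zero[OF assms] by (intro eventually_ball_finite) auto
  moreover have "eventually (\<lambda>i. i < I0) at_bot"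
    unfolding eventually_at_bot_dense by blast
  ultimately show ?thesis
  proof eventually_elim
    case (elim i)
    have "X i j *v fls_vec_nth x j = 0" for j
      using elim corner m by (cases "j \<le> m"; cases "j \<le> J0") auto
    then show ?case by simp
  qed
qed

lemma fls_vec_nth_block_op:
  assumes "X \<in> Mdz"
  shows "fls_vec_nth (block_op X x) i = Sum_any (\<lambda>j. X i j *v fls_vec_nth x j)"
proof -
  define c where "c i = Sum_any (\<lambda>j. X i j *v fls_vec_nth x j)" for i
  obtain N where N: "\<forall>i<N. c i = 0"
    using block_op_coeff_eventually_zero[OF assms] unfolding c_def eventually_at_bot_dense by blast
  have "fls_nth (Abs_fls (\<lambda>i. c i $ r)) i = c i $ r" for r
    by (rule nth_Abs_fls_lower_bound[of N]) (simp add: N)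
  then have "fls_vec_nth (\<chi> r. Abs_fls (\<lambda>i. c i $ r)) i = c i"
    by (simp add: fls_vec_nth_def vec_eq_iff)
  then show ?thesis by (simp add: block_op_def c_def)
qed

lemma additive_block_op:
  assumes "X \<in> Mdz"
  shows "Modules.additive (block_op X)"
proof
  fix x y :: "('a fls)^'b"
  have "fls_vec_nth (block_op X (x + y)) i = fls_vec_nth (block_op X x + block_op X y) i" for i
  proof -
    have "fls_vec_nth (block_op X (x + y)) i
        = Sum_any (\<lambda>j. X i j *v fls_vec_nth x j + X i j *v fls_vec_nth y j)"
      by (simp add: fls_vec_nth_block_op[OF assms] additive.add[OF additive_fls_vec_nth]
          matrix_vector_right_distrib)
    also have "\<dots> = fls_vec_nth (block_op X x) i + fls_vec_nth (block_op X y) i"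
      by (simp add: Sum_any.distrib finite_block_row_support[OF assms] fls_vec_nth_block_op[OF assms])
    finally show ?thesis by (simp add: additive.add[OF additive_fls_vec_nth])
  qed
  then show "block_op X (x + y) = block_op X x + block_op X y"
    by (simp add: fls_vec_eq_iff)
qed

lemma block_op_vanishes_below:
  assumes "X \<in> Mdz"
  shows "\<exists>J. \<forall>y. vanishes_below J y \<longrightarrow> vanishes_below I (block_op X y)"
proof -
  obtain I0 J0 where corner: "\<forall>i j. i < I0 \<and> j > J0 \<longrightarrow> X i j = 0"
    using assms unfolding Mdz_def by blast
  have "eventually (\<lambda>j. \<forall>i\<in>{I0..<I}. X i j = 0) at_top"
    using Mdz_row_eventually_zero[OF assms] by (intro eventually_ball_finite) auto
  then obtain J1 where J1: "\<forall>j\<ge>J1. \<forall>i\<in>{I0..<I}. X i j = 0"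
    unfolding eventually_at_top_linorder by blast
  have "vanishes_below I (block_op X y)" if y: "vanishes_below (max J1 (J0 + 1)) y" for y
    unfolding vanishes_below_def
  proof (intro allI impI)
    fix i assume "i < I"
    have "X i j *v fls_vec_nth y j = 0" for j
      using y corner J1 \<open>i < I\<close> unfolding vanishes_below_def
      by (cases "j < max J1 (J0 + 1)"; cases "i < I0") auto
    then show "fls_vec_nth (block_op X y) i = 0"
      by (simp add: fls_vec_nth_block_op[OF assms])
  qed
  then show ?thesis by blast
qed

lemma block_op_in_cont_End: "X \<in> Mdz \<Longrightarrow> block_op X \<in> cont_End"
  by (simp add: cont_End_iff additive_block_op block_op_vanishes_below)

lemma block_block_op:
  fixes X :: "int \<Rightarrow> int \<Rightarrow> 'k::{field,finite}^'n^'n"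
  assumes "X \<in> Mdz"
  shows "block (block_op X) = X"
proof (intro ext)
  fix i j
  have "fls_vec_nth (block_op X (fls_vec_monom v j)) i = X i j *v v" for v
  proof -
    have "Sum_any (\<lambda>j'. X i j' *v fls_vec_nth (fls_vec_monom v j) j')
        = Sum_any (\<lambda>j'. if j' = j then X i j *v v else 0)"
      by (rule Sum_any.cong) simp
    also have "\<dots> = X i j *v v"
      by (subst Sum_any.expand_superset[of "{j}"]) auto
    finally show ?thesis by (simp add: fls_vec_nth_block_op[OF assms])
  qed
  then show "block (block_op X) i j = X i j"
    by (simp add: block_eq_matrix)
qed

lemma block_op_block:
  fixes A :: "('k::{field,finite} fls)^'n \<Rightarrow> ('k fls)^'n"
  assumes "prime CARD('k)" and "A \<in> cont_End"
  shows "block_op (block A) = A"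
proof
  fix x
  show "block_op (block A) x = A x"
    by (simp add: fls_vec_eq_iff fls_vec_nth_block_op[OF block_in_Mdz[OF assms(2)]]
        fls_vec_nth_eq_block_Sum_any[OF assms])
qed

lemma matrix_mul_left_zero [simp]: "(0::'a::semiring_1^'n^'m) ** B = 0"
  by (simp add: matrix_matrix_mult_def vec_eq_iff)

lemma matrix_mul_right_zero [simp]: "A ** (0::'a::semiring_1^'p^'n) = 0"
  by (simp add: matrix_matrix_mult_def vec_eq_iff)

lemma finite_block_mult_support:
  assumes "X \<in> Mdz" and "Y \<in> Mdz"
  shows "finite {k. X i k \<noteq> 0 \<and> Y k j \<noteq> 0}"
proof (rule finite_int_Collect_if_eventually_not)
  show "eventually (\<lambda>k. \<not> (X i k \<noteq> 0 \<and> Y k j \<noteq> 0)) at_top"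
    using Mdz_row_eventually_zero[OF assms(1), of i] by (rule eventually_mono) simp
  show "eventually (\<lambda>k. \<not> (X i k \<noteq> 0 \<and> Y k j \<noteq> 0)) at_bot"
    using Mdz_column_eventually_zero[OF assms(2), of j] by (rule eventually_mono) simp
qed

lemma block_mult_eq_Sum_any:
  assumes "X \<in> Mdz" and "Y \<in> Mdz"
  shows "block_mult X Y i j = Sum_any (\<lambda>k. X i k ** Y k j)"
proof -
  have "{k. X i k ** Y k j \<noteq> 0} \<subseteq> {k. X i k \<noteq> 0 \<and> Y k j \<noteq> 0}"
    by auto
  then show ?thesis
    unfolding block_mult_def
    by (intro Sum_any.expand_superset[symmetric] finite_block_mult_support assms)
qed

lemma Sum_any_matrix_vector_mult:
  fixes M :: "'b \<Rightarrow> 'a::ring_1^'n^'m"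
  assumes "finite {k. M k \<noteq> 0}"
  shows "Sum_any M *v v = Sum_any (\<lambda>k. M k *v v)"
proof -
  have additive: "Modules.additive (\<lambda>M :: 'a^'n^'m. M *v v)"
    by unfold_locales (rule matrix_vector_mult_add_rdistrib)
  have "Sum_any M *v v = (\<Sum>k\<in>{k. M k \<noteq> 0}. M k *v v)"
    using additive.sum[OF additive, of M "{k. M k \<noteq> 0}"] by (simp add: Sum_any.expand_set)
  also have "\<dots> = Sum_any (\<lambda>k. M k *v v)"
    by (rule Sum_any.expand_superset[symmetric]) (auto simp: assms)
  finally show ?thesis .
qed

lemma block_comp:
  fixes A B :: "('k::{field,finite} fls)^'n \<Rightarrow> ('k fls)^'n"
  assumes p: "prime CARD('k)" and A: "A \<in> cont_End" and B: "B \<in> cont_End"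
  shows "block (A \<circ> B) = block_mult (block A) (block B)"
proof (intro ext)
  fix i j
  have add: "Modules.additive A" "Modules.additive B"
    using A B by (simp_all add: cont_End_iff)
  then have "Modules.additive (A \<circ> B)"
    by unfold_locales (simp add: additive.add)
  have support: "finite {k. block A i k ** block B k j \<noteq> 0}"
    using finite_block_mult_support[OF block_in_Mdz[OF A] block_in_Mdz[OF B], of i j]
    by (rule rev_finite_subset) auto
  have "block (A \<circ> B) i j *v v = block_mult (block A) (block B) i j *v v" for v
  proof -
    have "block (A \<circ> B) i j *v v = fls_vec_nth (A (B (fls_vec_monom v j))) i"
      by (simp add: block_matrix_vector_mult[OF p \<open>Modules.additive (A \<circ> B)\<close>])
    also have "\<dots> = Sum_any (\<lambda>k. block A i k *v (block B k j *v v))"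
      by (simp add: fls_vec_nth_eq_block_Sum_any[OF p A] block_matrix_vector_mult[OF p add(2)])
    also have "\<dots> = Sum_any (\<lambda>k. block A i k ** block B k j) *v v"
      by (simp add: Sum_any_matrix_vector_mult[OF support] matrix_vector_mul_assoc)
    also have "\<dots> = block_mult (block A) (block B) i j *v v"
      by (simp add: block_mult_eq_Sum_any block_in_Mdz A B)
    finally show ?thesis .
  qed
  then show "block (A \<circ> B) i j = block_mult (block A) (block B) i j"
    by (simp add: matrix_eq)
qed

theorem mainTheorem8:
  fixes p :: nat
  assumes "prime p" and "CARD('k::{field,finite}) = p"
  shows "bij_betw (block :: ('k fls^'n::finite \<Rightarrow> 'k fls^'n) \<Rightarrow> _) cont_End Mdz
       \<and> (\<forall>A\<in>(cont_End :: ('k fls^'n \<Rightarrow> 'k fls^'n) set). \<forall>B\<in>cont_End.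
            block (\<lambda>x. A x + B x) = (\<lambda>i j. block A i j + block B i j)
          \<and> block (A \<circ> B) = block_mult (block A) (block B))
       \<and> block (id :: 'k fls^'n \<Rightarrow> 'k fls^'n) = block_one"
proof (intro conjI ballI)
  have p: "prime CARD('k)" using assms by simp
  show "bij_betw (block :: ('k fls^'n::finite \<Rightarrow> 'k fls^'n) \<Rightarrow> _) cont_End Mdz"
    by (rule bij_betw_byWitness[where f' = block_op])
      (auto simp: block_op_block[OF p] block_block_op block_in_Mdz block_op_in_cont_End)
  show "block (A \<circ> B) = block_mult (block A) (block B)"
    if "A \<in> cont_End" and "B \<in> cont_End" for A B :: "'k fls^'n \<Rightarrow> 'k fls^'n"
    using block_comp[OF p that] .
qed (simp_all add: block_def block_one_def vec_eq_iff fun_eq_iff mat_def monom_fls_def)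

end
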